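(* Let $\phi$ be a reduced Boolean formula in the variables $x_1,\dots,x_n$ defining a set $S \subseteq \{0,1\}^n$ and let $Q \subseteq [0,1]^n$ be any convex set containing $S$. Then $\phi(Q) \cap \mathbb{Z}^n = S$.
   Context: Boolean formulas are built from input variables $x_1,\dots,x_n$ using $\wedge$, $\vee$, $\neg$, interpreted as functions $\{0,1\}^n\to\{0,1\}$; $\phi$ defines $S=\{x\in\{0,1\}^n:\phi(x)=1\}$. A formula is reduced if negations apply only to input variables. For a reduced $\phi$ and convex $Q\subseteq[0,1]^n$, $\phi(Q)$ is defined recursively: $x_i$ is replaced by $\{x \in Q : x_i = 1\}$; $\neg x_i$ by $\{x \in Q : x_i = 0\}$; a conjunction by the intersection of the corresponding sets; a disjunction by the convex hull of the union of the corresponding sets. *)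

theory Defs
  imports "HOL-Analysis.Analysis"
begin

datatype 'n bformula =
    BVar 'n
  | BNot "'n bformula"
  | BAnd "'n bformula" "'n bformula"
  | BOr "'n bformula" "'n bformula"

fun beval :: "'n bformula \<Rightarrow> ('n \<Rightarrow> bool) \<Rightarrow> bool" where
  "beval (BVar i) a = a i"
| "beval (BNot f) a = (\<not> beval f a)"
| "beval (BAnd f g) a = (beval f a \<and> beval g a)"
| "beval (BOr f g) a = (beval f a \<or> beval g a)"

fun reduced :: "'n bformula \<Rightarrow> bool" where
  "reduced (BVar i) = True"
| "reduced (BNot (BVar i)) = True"
| "reduced (BNot _) = False"
| "reduced (BAnd f g) = (reduced f \<and> reduced g)"
| "reduced (BOr f g) = (reduced f \<and> reduced g)"

definition binary_points :: "(real^'n) set" where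
  "binary_points = {x. \<forall>i. x $ i = 0 \<or> x $ i = 1}"

definition defined_set :: "'n::finite bformula \<Rightarrow> (real^'n) set" where
  "defined_set \<phi> = {x \<in> binary_points. beval \<phi> (\<lambda>i. x $ i = 1)}"

definition unit_cube :: "(real^'n) set" where
  "unit_cube = {x. \<forall>i. 0 \<le> x $ i \<and> x $ i \<le> 1}"

definition int_lattice :: "(real^'n) set" where
  "int_lattice = {x. \<forall>i. x $ i \<in> \<int>}"

text \<open>phi(Q) for a reduced formula phi and a convex set Q
  (the value on non-reduced negations is irrelevant and set to {}).\<close>
fun relax :: "'n::finite bformula \<Rightarrow> (real^'n) set \<Rightarrow> (real^'n) set" where
  "relax (BVar i) Q = {x \<in> Q. x $ i = 1}"
| "relax (BNot (BVar i)) Q = {x \<in> Q. x $ i = 0}"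
| "relax (BNot _) Q = {}"
| "relax (BAnd f g) Q = relax f Q \<inter> relax g Q"
| "relax (BOr f g) Q = convex hull (relax f Q \<union> relax g Q)"

end

theory Submission
  imports Defs
begin

text \<open>Every 0/1 point is an extreme point of the unit cube, hence of every subset of the cube
  containing it, and an extreme point of a convex hull lies in the generating set. So along the
  recursion defining \<open>\<phi>(Q)\<close>, taking convex hulls of unions adds no new 0/1 points, and by
  induction the 0/1 points of \<open>\<phi>(Q)\<close> are exactly the points of \<open>Q \<inter> {0,1}\<^sup>n\<close> satisfying \<open>\<phi>\<close>.
  Finally, the only integer points of \<open>[0,1]\<^sup>n\<close> are its 0/1 points.\<close>

lemma convex_unit_cube: "convex unit_cube"
proof -
  have "{t :: real. 0 \<le> t \<and> t \<le> 1} = {0..1}"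
    by auto
  then show ?thesis
    unfolding unit_cube_def by (intro convex_box_cart) simp
qed

lemma binary_value_strict_convex_combination:
  fixes a b u t :: real
  assumes "t = 0 \<or> t = 1" "0 \<le> a" "a \<le> 1" "0 \<le> b" "b \<le> 1" "0 < u" "u < 1"
    and "t = (1 - u) * a + u * b"
  shows "a = t \<and> b = t"
  using assms(1)
proof
  assume t0: "t = 0"
  have "(1 - u) * a \<ge> 0" "u * b \<ge> 0" using assms by auto
  then have "(1 - u) * a = 0" "u * b = 0" using assms(8) t0 by linarith+
  then show ?thesis using assms t0 by auto
next
  assume t1: "t = 1"
  have "(1 - u) * (1 - a) \<ge> 0" "u * (1 - b) \<ge> 0" using assms by auto
  moreover have "(1 - u) * (1 - a) + u * (1 - b) = 0" using assms(8) t1 by (simp add: algebra_simps)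
  ultimately have "(1 - u) * (1 - a) = 0" "u * (1 - b) = 0" by linarith+
  then show ?thesis using assms t1 by auto
qed

lemma binary_point_extreme_point_of:
  assumes "x \<in> binary_points" "x \<in> T" "T \<subseteq> unit_cube"
  shows "x extreme_point_of T"
  unfolding extreme_point_of_def
proof (intro conjI ballI notI)
  fix a b assume ab: "a \<in> T" "b \<in> T" and "x \<in> open_segment a b"
  then have "x \<noteq> a" "x \<noteq> b" "x \<in> closed_segment a b"
    by (auto simp: open_segment_def)
  then obtain u where u: "0 \<le> u" "u \<le> 1" "x = (1 - u) *\<^sub>R a + u *\<^sub>R b"
    by (auto simp: closed_segment_def)
  have "0 < u" "u < 1"
    using u \<open>x \<noteq> a\<close> \<open>x \<noteq> b\<close> by (auto simp: less_le)
  have "a $ i = x $ i" for i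
  proof (rule conjunct1[OF binary_value_strict_convex_combination])
    show "x $ i = 0 \<or> x $ i = 1"
      using assms(1) by (simp add: binary_points_def)
    show "0 \<le> a $ i" "a $ i \<le> 1" "0 \<le> b $ i" "b $ i \<le> 1"
      using ab assms(3) by (auto simp: unit_cube_def)
    show "x $ i = (1 - u) * a $ i + u * b $ i"
      using u(3) by simp
  qed fact+
  then show False
    using \<open>x \<noteq> a\<close> by (simp add: vec_eq_iff)
qed (fact assms(2))

lemma binary_point_in_convex_hull:
  assumes "x \<in> binary_points" "x \<in> convex hull T" "T \<subseteq> unit_cube"
  shows "x \<in> T"
proof -
  have "convex hull T \<subseteq> unit_cube"
    using assms(3) convex_unit_cube by (rule hull_minimal)
  with assms(1,2) show ?thesis
    by (blast intro: extreme_point_of_convex_hull binary_point_extreme_point_of)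
qed

lemma relax_subset:
  assumes "reduced \<phi>" "convex Q"
  shows "relax \<phi> Q \<subseteq> Q"
  using assms(1)
proof (induction \<phi> rule: reduced.induct)
  case (5 f g)
  then show ?case using assms(2) by (simp add: hull_minimal)
qed auto

lemma relax_Int_binary_points:
  assumes "reduced \<phi>" "convex Q" "Q \<subseteq> unit_cube"
  shows "relax \<phi> Q \<inter> binary_points = {x \<in> Q \<inter> binary_points. beval \<phi> (\<lambda>i. x $ i = 1)}"
  using assms(1)
proof (induction \<phi> rule: reduced.induct)
  case (1 i)
  then show ?case by auto
next
  case (2 i)
  then show ?case by (auto simp: binary_points_def)
next
  case (4 f g)
  then show ?case by auto
next
  case (5 f g)
  have "relax f Q \<union> relax g Q \<subseteq> Q"
    using "5.prems" relax_subset[OF _ assms(2)] by simp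
  then have in_cube: "relax f Q \<union> relax g Q \<subseteq> unit_cube"
    using assms(3) by blast
  have "relax (BOr f g) Q \<inter> binary_points \<subseteq> relax f Q \<union> relax g Q"
    using binary_point_in_convex_hull[OF _ _ in_cube] by (simp add: subset_iff)
  moreover have "relax f Q \<union> relax g Q \<subseteq> relax (BOr f g) Q"
    by (simp add: hull_subset)
  ultimately have "relax (BOr f g) Q \<inter> binary_points = (relax f Q \<union> relax g Q) \<inter> binary_points"
    by blast
  with 5 show ?case by auto
qed simp_all

lemma unit_cube_Int_int_lattice: "unit_cube \<inter> int_lattice = binary_points"
proof -
  have "(t \<in> \<int> \<and> 0 \<le> t \<and> t \<le> 1) \<longleftrightarrow> t = 0 \<or> t = 1" for t :: real
    by (auto elim!: Ints_cases)
  then show ?thesis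
    unfolding unit_cube_def int_lattice_def binary_points_def by blast
qed

theorem corollary4p6:
  fixes \<phi> :: "'n::finite bformula" and Q :: "(real^'n) set"
  assumes "reduced \<phi>"
    and "convex Q"
    and "Q \<subseteq> unit_cube"
    and "defined_set \<phi> \<subseteq> Q"
  shows "relax \<phi> Q \<inter> int_lattice = defined_set \<phi>"
proof -
  have "relax \<phi> Q \<subseteq> unit_cube"
    using relax_subset[OF assms(1,2)] assms(3) by blast
  then have "relax \<phi> Q \<inter> int_lattice = relax \<phi> Q \<inter> binary_points"
    using unit_cube_Int_int_lattice by blast
  also have "\<dots> = defined_set \<phi>"
    using relax_Int_binary_points[OF assms(1-3)] assms(4) unfolding defined_set_def by auto
  finally show ?thesis .
qed

end
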